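(* Any seller strategy, even an adaptive one, achieves expected revenue at most ${\sf MBRev}(\mathcal D)T+o(T)$ against a conservative buyer running a no-regret algorithm (i.e. a buyer who overbids with probability $0$).
   Context: Model: single seller, single buyer, $T$ rounds. Buyer's value drawn each round independently from $\mathcal D$ with finite support $0\le v_1<\dots<v_m\le1$, $\Pr[v_i]=q_i>0$. A seller strategy offers arms $0,\dots,K$ with bid labels $0=b_0<\dots<b_K\le1$; at round $t$ arm $i$ has allocation probability $a_{i,t}\in[0,1]$ and price $p_{i,t}\in[0,a_{i,t}b_i]$; arm 0 has $a_{0,t}=p_{0,t}=0$; monotone: $a_{i,t}\ge a_{j,t}$, $p_{i,t}\ge p_{j,t}$ for $i>j$. An adaptive seller may set round-$t$ parameters after seeing the history and the buyer's round-$t$ distribution over arms. Buyer utility from arm $i$ with value $v$: $va_{i,t}-p_{i,t}$. A conservative buyer never chooses an arm whose bid label exceeds his current value. No-regret here means: for each value $v_i$, the buyer's expected total utility over the rounds in which his value is $v_i$ is at least that of always playing any fixed arm $j$ with $b_j\le v_i$ in those rounds, minus $o(T)$. Mean-based revenue LP: maximize $\sum_i q_i(v_ix_i-u_i)$ subject to $u_i\ge(v_i-v_j)x_j$ for all $i>j$, $u_i\ge0$, $0\le x_i\le1$; its value is ${\sf MBRev}(\mathcal D)$. *)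

theory Defs
  imports "HOL-Probability.Probability" "HOL-Library.Landau_Symbols"
begin

text \<open>A round-t mechanism: allocation probabilities and prices of the arms (arm index :: nat).\<close>
type_synonym mech = "(nat \<Rightarrow> real) \<times> (nat \<Rightarrow> real)"

text \<open>A completed round: (buyer value, chosen arm, mechanism used).\<close>
type_synonym round = "real \<times> nat \<times> mech"
type_synonym hist = "round list"

type_synonym buyer_alg = "hist \<Rightarrow> real \<Rightarrow> nat pmf"

text \<open>Adaptive (possibly randomized) seller: given the history and the buyer's round-t
  distribution over arms (as a function of the value), chooses the round-t mechanism.\<close>
type_synonym seller_strat = "hist \<Rightarrow> (real \<Rightarrow> nat pmf) \<Rightarrow> mech pmf"

definition valid_labels :: "nat \<Rightarrow> (nat \<Rightarrow> real) \<Rightarrow> bool" where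
  "valid_labels K b \<longleftrightarrow> b 0 = 0 \<and> (\<forall>i<K. b i < b (Suc i)) \<and> b K \<le> 1"

definition valid_mech :: "nat \<Rightarrow> (nat \<Rightarrow> real) \<Rightarrow> mech \<Rightarrow> bool" where
  "valid_mech K b M \<longleftrightarrow>
     fst M 0 = 0 \<and> snd M 0 = 0 \<and>
     (\<forall>i\<le>K. 0 \<le> fst M i \<and> fst M i \<le> 1 \<and> 0 \<le> snd M i \<and> snd M i \<le> fst M i * b i) \<and>
     (\<forall>i\<le>K. \<forall>j<i. fst M j \<le> fst M i \<and> snd M j \<le> snd M i)"

definition valid_seller :: "nat \<Rightarrow> (nat \<Rightarrow> real) \<Rightarrow> seller_strat \<Rightarrow> bool" where
  "valid_seller K b S \<longleftrightarrow> valid_labels K b \<and>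
     (\<forall>h \<sigma>. \<forall>M \<in> set_pmf (S h \<sigma>). valid_mech K b M)"

definition buyer_arms :: "real pmf \<Rightarrow> nat \<Rightarrow> buyer_alg \<Rightarrow> bool" where
  "buyer_arms D K A \<longleftrightarrow> (\<forall>h. \<forall>v \<in> set_pmf D. set_pmf (A h v) \<subseteq> {..K})"

definition conservative :: "real pmf \<Rightarrow> (nat \<Rightarrow> real) \<Rightarrow> buyer_alg \<Rightarrow> bool" where
  "conservative D b A \<longleftrightarrow> (\<forall>h. \<forall>v \<in> set_pmf D. \<forall>j \<in> set_pmf (A h v). b j \<le> v)"

primrec play :: "real pmf \<Rightarrow> seller_strat \<Rightarrow> buyer_alg \<Rightarrow> nat \<Rightarrow> hist pmf" where
  "play D S A 0 = return_pmf []"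
| "play D S A (Suc t) =
     bind_pmf (play D S A t) (\<lambda>h.
     bind_pmf (S h (A h)) (\<lambda>M.
     bind_pmf D (\<lambda>v.
     bind_pmf (A h v) (\<lambda>j.
     return_pmf (h @ [(v, j, M)])))))"

definition revenue :: "real pmf \<Rightarrow> seller_strat \<Rightarrow> buyer_alg \<Rightarrow> nat \<Rightarrow> real" where
  "revenue D S A T = measure_pmf.expectation (play D S A T)
     (\<lambda>h. sum_list (map (\<lambda>(v, j, M). snd M j) h))"

definition util_actual :: "real pmf \<Rightarrow> seller_strat \<Rightarrow> buyer_alg \<Rightarrow> nat \<Rightarrow> real \<Rightarrow> real" where
  "util_actual D S A T w = measure_pmf.expectation (play D S A T)
     (\<lambda>h. sum_list (map (\<lambda>(v, j, M). if v = w then w * fst M j - snd M j else 0) h))"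

definition util_fixed :: "real pmf \<Rightarrow> seller_strat \<Rightarrow> buyer_alg \<Rightarrow> nat \<Rightarrow> real \<Rightarrow> nat \<Rightarrow> real" where
  "util_fixed D S A T w k = measure_pmf.expectation (play D S A T)
     (\<lambda>h. sum_list (map (\<lambda>(v, j, M). if v = w then w * fst M k - snd M k else 0) h))"

definition mb_feasible :: "real pmf \<Rightarrow> (real \<Rightarrow> real) \<Rightarrow> (real \<Rightarrow> real) \<Rightarrow> bool" where
  "mb_feasible D x u \<longleftrightarrow> (\<forall>v \<in> set_pmf D. 0 \<le> u v \<and> 0 \<le> x v \<and> x v \<le> 1 \<and>
     (\<forall>w \<in> set_pmf D. w < v \<longrightarrow> (v - w) * x w \<le> u v))"

definition MBRev :: "real pmf \<Rightarrow> real" where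
  "MBRev D = Sup {(\<Sum>v \<in> set_pmf D. pmf D v * (v * x v - u v)) | x u. mb_feasible D x u}"

end

theory Submission
  imports Defs
begin

text \<open>Write \<open>q\<^sub>w\<close> for the probability of value \<open>w\<close>, \<open>X\<^sub>w\<close> for the expected total allocation
  and \<open>U\<^sub>w\<close> for the expected total utility of the buyer in the rounds where his value is \<open>w\<close>.
  For \<open>w < v\<close> let \<open>k\<close> be the highest arm with label at most \<open>w\<close>, and \<open>Y\<^sub>k\<close> the expected
  total allocation of arm \<open>k\<close> over all rounds. A conservative buyer of value \<open>w\<close> plays only
  arms below \<open>k\<close>, so \<open>X\<^sub>w \<le> q\<^sub>w Y\<^sub>k\<close>; since the seller fixes the mechanism before the value
  is drawn, always playing arm \<open>k\<close> earns a buyer of value \<open>v\<close> at least \<open>q\<^sub>v (v - w) Y\<^sub>k\<close>.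
  No regret therefore gives \<open>(v - w) X\<^sub>w / q\<^sub>w \<le> (U\<^sub>v + \<rho>) / q\<^sub>v\<close>, i.e. \<open>x\<^sub>w = X\<^sub>w / (q\<^sub>w T)\<close>
  and \<open>u\<^sub>v = (U\<^sub>v + \<rho>) / (q\<^sub>v T)\<close> are feasible for the mean-based LP. Their objective value is
  \<open>(Rev - |supp D| \<rho>) / T\<close>, because the revenue is \<open>\<Sum>\<^sub>w (w X\<^sub>w - U\<^sub>w)\<close>.\<close>

section \<open>Expectations over probability mass functions\<close>

lemma integrable_measure_pmf_bounded:
  fixes f :: "'a \<Rightarrow> real"
  assumes "\<And>x. x \<in> set_pmf p \<Longrightarrow> \<bar>f x\<bar> \<le> B"
  shows "integrable (measure_pmf p) f"
  by (rule measure_pmf.integrable_const_bound[where B = B]) (auto simp: AE_measure_pmf_iff assms)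

lemma abs_expectation_le_bound:
  fixes f :: "'a \<Rightarrow> real"
  assumes "\<And>x. x \<in> set_pmf p \<Longrightarrow> \<bar>f x\<bar> \<le> B"
  shows "\<bar>measure_pmf.expectation p f\<bar> \<le> B"
proof -
  have "integrable (measure_pmf p) f"
    using assms by (rule integrable_measure_pmf_bounded)
  moreover have "AE x in measure_pmf p. - B \<le> f x \<and> f x \<le> B"
    using assms by (fastforce simp: AE_measure_pmf_iff abs_le_iff)
  ultimately show ?thesis
    using measure_pmf.integral_le_const[of p f B] measure_pmf.integral_ge_const[of p f "- B"]
    by (auto simp: abs_le_iff)
qed

lemma expectation_bind_pmf_bounded:
  fixes f :: "'b \<Rightarrow> real"
  assumes bounded: "\<And>y. y \<in> set_pmf (bind_pmf M N) \<Longrightarrow> \<bar>f y\<bar> \<le> B"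
  shows "measure_pmf.expectation (bind_pmf M N) f =
         measure_pmf.expectation M (\<lambda>x. measure_pmf.expectation (N x) f)"
proof -
  \<comment> \<open>The Giry-monad rule needs a global bound, so truncate \<open>f\<close> outside the support first.\<close>
  define g where "g y = max (- \<bar>B\<bar>) (min \<bar>B\<bar> (f y))" for y
  have g_eq: "g y = f y" if "y \<in> set_pmf (bind_pmf M N)" for y
    using bounded[OF that] by (auto simp: g_def)
  have "measure_pmf.expectation (bind_pmf M N) f = measure_pmf.expectation (bind_pmf M N) g"
    by (rule integral_cong_AE) (auto simp: AE_measure_pmf_iff g_eq)
  also have "\<dots> = measure_pmf.expectation M (\<lambda>x. measure_pmf.expectation (N x) g)"
    unfolding measure_pmf_bind
    using measurable_space[OF measurable_measure_pmf[of N]]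
    by (intro integral_bind[where K = "count_space UNIV" and B = "\<bar>B\<bar>" and B' = 1])
       (auto simp: g_def measure_pmf.emeasure_space_1)
  also have "\<dots> = measure_pmf.expectation M (\<lambda>x. measure_pmf.expectation (N x) f)"
  proof (rule integral_cong_AE)
    show "AE x in measure_pmf M. measure_pmf.expectation (N x) g = measure_pmf.expectation (N x) f"
      by (auto simp: AE_measure_pmf_iff intro!: integral_cong_AE g_eq; blast)
  qed simp_all
  finally show ?thesis .
qed

section \<open>The play of the repeated auction\<close>

definition round_pmf :: "real pmf \<Rightarrow> seller_strat \<Rightarrow> buyer_alg \<Rightarrow> hist \<Rightarrow> round pmf" where
  "round_pmf D S A h =
     bind_pmf (S h (A h)) (\<lambda>M. bind_pmf D (\<lambda>v. bind_pmf (A h v) (\<lambda>j. return_pmf (v, j, M))))"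

lemma play_Suc_round_pmf:
  "play D S A (Suc t) = bind_pmf (play D S A t) (\<lambda>h. map_pmf (\<lambda>x. h @ [x]) (round_pmf D S A h))"
  by (simp add: round_pmf_def map_bind_pmf map_return_pmf)

lemma length_play: "h \<in> set_pmf (play D S A t) \<Longrightarrow> length h = t"
  by (induction t arbitrary: h) auto

lemma abs_sum_list_le:
  fixes \<phi> :: "'a \<Rightarrow> real"
  assumes "\<And>x. x \<in> set xs \<Longrightarrow> \<bar>\<phi> x\<bar> \<le> B"
  shows "\<bar>sum_list (map \<phi> xs)\<bar> \<le> real (length xs) * B"
  using assms by (induction xs) (auto simp: algebra_simps intro!: order_trans[OF abs_triangle_ineq] add_mono)

lemma expectation_play_Suc:
  fixes \<phi> :: "round \<Rightarrow> real"
  assumes bounded: "\<And>x. \<bar>\<phi> x\<bar> \<le> B"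
  shows "measure_pmf.expectation (play D S A (Suc t)) (\<lambda>h. sum_list (map \<phi> h)) =
     measure_pmf.expectation (play D S A t) (\<lambda>h. sum_list (map \<phi> h)) +
     measure_pmf.expectation (play D S A t) (\<lambda>h. measure_pmf.expectation (round_pmf D S A h) \<phi>)"
proof -
  have sum_bounded: "\<bar>sum_list (map \<phi> h)\<bar> \<le> real t * B" if "h \<in> set_pmf (play D S A t)" for t h
    using abs_sum_list_le[of h \<phi> B] bounded length_play[OF that] by simp
  have round_integrable: "integrable (measure_pmf (round_pmf D S A h)) \<phi>" for h
    using bounded by (rule integrable_measure_pmf_bounded)
  have "measure_pmf.expectation (play D S A (Suc t)) (\<lambda>h. sum_list (map \<phi> h)) =
      measure_pmf.expectation (play D S A t) (\<lambda>h.
        measure_pmf.expectation (map_pmf (\<lambda>x. h @ [x]) (round_pmf D S A h)) (\<lambda>h. sum_list (map \<phi> h)))"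
    unfolding play_Suc_round_pmf
    by (rule expectation_bind_pmf_bounded, rule sum_bounded[where t = "Suc t"]) (simp only: play_Suc_round_pmf)
  also have "\<dots> = measure_pmf.expectation (play D S A t)
      (\<lambda>h. sum_list (map \<phi> h) + measure_pmf.expectation (round_pmf D S A h) \<phi>)"
    using round_integrable by simp
  also have "\<dots> = measure_pmf.expectation (play D S A t) (\<lambda>h. sum_list (map \<phi> h)) +
      measure_pmf.expectation (play D S A t) (\<lambda>h. measure_pmf.expectation (round_pmf D S A h) \<phi>)"
  proof (rule Bochner_Integration.integral_add)
    show "integrable (measure_pmf (play D S A t)) (\<lambda>h. sum_list (map \<phi> h))"
      using sum_bounded by (rule integrable_measure_pmf_bounded)
    show "integrable (measure_pmf (play D S A t)) (\<lambda>h. measure_pmf.expectation (round_pmf D S A h) \<phi>)"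
      using bounded by (intro integrable_measure_pmf_bounded abs_expectation_le_bound)
  qed
  finally show ?thesis .
qed

lemma expectation_round_pmf:
  fixes \<phi> :: "round \<Rightarrow> real"
  assumes bounded: "\<And>x. \<bar>\<phi> x\<bar> \<le> B"
  shows "measure_pmf.expectation (round_pmf D S A h) \<phi> =
    measure_pmf.expectation (S h (A h)) (\<lambda>M. measure_pmf.expectation D (\<lambda>v.
      measure_pmf.expectation (A h v) (\<lambda>j. \<phi> (v, j, M))))"
  unfolding round_pmf_def using bounded
  by (simp add: expectation_bind_pmf_bounded[where B = B])

lemma expectation_point_indicator:
  "measure_pmf.expectation D (\<lambda>v. if v = w then c else 0 :: real) = pmf D w * c"
  by (subst integral_measure_pmf_real[where A = "{w}"]) (auto split: if_splits)

lemma expectation_round_pmf_value_indicator: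
  fixes f :: "mech \<Rightarrow> real"
  assumes bounded: "\<And>M. \<bar>f M\<bar> \<le> B"
  shows "measure_pmf.expectation (round_pmf D S A h) (\<lambda>(v, j, M). if v = w then f M else 0) =
     pmf D w * measure_pmf.expectation (round_pmf D S A h) (\<lambda>(v, j, M). f M)"
proof -
  have "0 \<le> B" using bounded[of undefined] by simp
  then have "measure_pmf.expectation (round_pmf D S A h) (\<lambda>(v, j, M). if v = w then f M else 0) =
      measure_pmf.expectation (S h (A h)) (\<lambda>M. pmf D w * f M)"
    using bounded by (subst expectation_round_pmf[where B = B]) (auto simp: expectation_point_indicator)
  also have "\<dots> = pmf D w * measure_pmf.expectation (round_pmf D S A h) (\<lambda>(v, j, M). f M)"
    using \<open>0 \<le> B\<close> bounded by (subst expectation_round_pmf[where B = B]) (auto split: prod.splits)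
  finally show ?thesis .
qed

lemma expectation_play_value_indicator:
  fixes f :: "mech \<Rightarrow> real"
  assumes bounded: "\<And>M. \<bar>f M\<bar> \<le> B"
  shows "measure_pmf.expectation (play D S A t)
       (\<lambda>h. sum_list (map (\<lambda>(v, j, M). if v = w then f M else 0) h)) =
     pmf D w * measure_pmf.expectation (play D S A t) (\<lambda>h. sum_list (map (\<lambda>(v, j, M). f M) h))"
proof (induction t)
  case 0
  then show ?case by simp
next
  case (Suc t)
  have "0 \<le> B" using bounded[of undefined] by simp
  then have indicator_bounded: "\<bar>(\<lambda>(v, j, M). if v = w then f M else 0) x\<bar> \<le> B"
    and mech_bounded: "\<bar>(\<lambda>(v, j, M). f M) x\<bar> \<le> B" for x
    using bounded by (auto split: prod.splits)
  have "integrable (measure_pmf (play D S A t))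
      (\<lambda>h. measure_pmf.expectation (round_pmf D S A h) (\<lambda>(v, j, M). f M))"
    using mech_bounded by (intro integrable_measure_pmf_bounded abs_expectation_le_bound)
  then show ?case
    unfolding expectation_play_Suc[OF indicator_bounded] expectation_play_Suc[OF mech_bounded] Suc
      expectation_round_pmf_value_indicator[OF bounded]
    by (simp add: algebra_simps)
qed

section \<open>Labels, mechanisms and the mean-based LP\<close>

lemma valid_labels_range:
  assumes "valid_labels K b" "k \<le> K"
  shows "0 \<le> b k \<and> b k \<le> 1"
proof -
  have "b i \<le> b (Suc i)" if "i \<in> {..<K}" for i
    using assms(1) that by (auto simp: valid_labels_def less_imp_le)
  then have "b 0 \<le> b k" "b k \<le> b K"
    using assms(2) by (auto intro: lift_Suc_mono_le_ivl[where N = "{..<K}"])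
  then show ?thesis
    using assms(1) by (simp add: valid_labels_def)
qed

lemma valid_mech_range:
  assumes "valid_labels K b" "valid_mech K b M" "k \<le> K"
  shows "0 \<le> snd M k \<and> snd M k \<le> fst M k \<and> fst M k \<le> 1"
proof -
  have "0 \<le> fst M k" "fst M k \<le> 1" "0 \<le> snd M k" "snd M k \<le> fst M k * b k"
    using assms(2,3) by (auto simp: valid_mech_def)
  moreover have "fst M k * b k \<le> fst M k"
    using valid_labels_range[OF assms(1,3)] \<open>0 \<le> fst M k\<close> by (simp add: mult_left_le)
  ultimately show ?thesis by linarith
qed

lemma valid_mech_alloc_mono:
  assumes "valid_mech K b M" "i \<le> K" "j \<le> i"
  shows "fst M j \<le> fst M i"
  using assms by (cases "j = i") (auto simp: valid_mech_def)

lemma greatest_arm_below: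
  assumes "valid_labels K b" "0 \<le> w"
  obtains k where "k \<le> K" "b k \<le> w" "\<And>j. j \<le> K \<Longrightarrow> b j \<le> w \<Longrightarrow> j \<le> k"
proof -
  define arms where "arms = {k. k \<le> K \<and> b k \<le> w}"
  have "finite arms" "0 \<in> arms"
    using assms by (auto simp: arms_def valid_labels_def)
  then have "Max arms \<in> arms" "\<And>j. j \<in> arms \<Longrightarrow> j \<le> Max arms"
    by (auto intro: Max_in)
  then show ?thesis
    using that by (auto simp: arms_def)
qed

lemma mb_objective_le_MBRev:
  assumes "finite (set_pmf D)" "set_pmf D \<subseteq> {0..1}" "mb_feasible D x u"
  shows "(\<Sum>v\<in>set_pmf D. pmf D v * (v * x v - u v)) \<le> MBRev D"
  unfolding MBRev_def
proof (rule cSup_upper)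
  show "bdd_above {\<Sum>v\<in>set_pmf D. pmf D v * (v * x v - u v) | x u. mb_feasible D x u}"
  proof (rule bdd_aboveI)
    fix y assume "y \<in> {\<Sum>v\<in>set_pmf D. pmf D v * (v * x v - u v) | x u. mb_feasible D x u}"
    then obtain x u where y: "y = (\<Sum>v\<in>set_pmf D. pmf D v * (v * x v - u v))"
      and feasible: "mb_feasible D x u" by blast
    have "pmf D v * (v * x v - u v) \<le> 1" if "v \<in> set_pmf D" for v
    proof -
      have "v * x v \<le> 1" "0 \<le> u v"
        using that assms(2) feasible by (auto simp: mb_feasible_def intro!: mult_le_one)
      then show ?thesis
        by (smt (verit) mult_left_le pmf_le_1 pmf_nonneg)
    qed
    then have "y \<le> (\<Sum>v\<in>set_pmf D. 1)"
      unfolding y by (rule sum_mono)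
    then show "y \<le> real (card (set_pmf D))" by simp
  qed
qed (use assms(3) in blast)

section \<open>Revenue against a conservative buyer\<close>

locale conservative_auction =
  fixes D :: "real pmf" and K :: nat and b :: "nat \<Rightarrow> real"
    and S :: seller_strat and A :: buyer_alg
  assumes finite_values: "finite (set_pmf D)"
    and values_unit: "set_pmf D \<subseteq> {0..1}"
    and seller_valid: "valid_seller K b S"
    and arms_exist: "buyer_arms D K A"
    and buyer_conservative: "conservative D b A"
begin

lemma labels_valid: "valid_labels K b"
  using seller_valid by (simp add: valid_seller_def)

definition admissible_round :: "round \<Rightarrow> bool" where
  "admissible_round x \<longleftrightarrow>
     (case x of (v, j, M) \<Rightarrow> v \<in> set_pmf D \<and> j \<le> K \<and> b j \<le> v \<and> valid_mech K b M)"

lemma admissible_play: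
  assumes "h \<in> set_pmf (play D S A t)" "x \<in> set h"
  shows "admissible_round x"
  using assms
proof (induction t arbitrary: h)
  case 0
  then show ?case by simp
next
  case (Suc t)
  then obtain h' M v j where h: "h = h' @ [(v, j, M)]" "h' \<in> set_pmf (play D S A t)"
    "M \<in> set_pmf (S h' (A h'))" "v \<in> set_pmf D" "j \<in> set_pmf (A h' v)"
    by auto
  show ?case
  proof (cases "x \<in> set h'")
    case True
    then show ?thesis using Suc.IH h(2) by blast
  next
    case False
    then have "x = (v, j, M)" using Suc.prems(2) h(1) by auto
    then show ?thesis
      using seller_valid arms_exist buyer_conservative h
      unfolding admissible_round_def valid_seller_def buyer_arms_def conservative_def by auto
  qed
qed

lemma admissible_round_range:
  assumes "admissible_round (v, j, M)" "k \<le> K"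
  shows "0 \<le> snd M k \<and> snd M k \<le> fst M k \<and> fst M k \<le> 1"
  using assms valid_mech_range[OF labels_valid _ assms(2)] by (simp add: admissible_round_def)

lemma admissible_round_played_range:
  assumes "admissible_round (v, j, M)"
  shows "0 \<le> snd M j \<and> snd M j \<le> fst M j \<and> fst M j \<le> 1"
  using assms by (intro admissible_round_range[of v j]) (simp_all add: admissible_round_def)

lemma integrable_play_sum_list:
  fixes \<phi> :: "round \<Rightarrow> real"
  assumes "\<And>x. admissible_round x \<Longrightarrow> \<bar>\<phi> x\<bar> \<le> B"
  shows "integrable (measure_pmf (play D S A T)) (\<lambda>h. sum_list (map \<phi> h))"
proof (rule integrable_measure_pmf_bounded)
  fix h assume "h \<in> set_pmf (play D S A T)"
  then show "\<bar>sum_list (map \<phi> h)\<bar> \<le> real T * B"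
    using abs_sum_list_le[of h \<phi> B] assms admissible_play length_play by metis
qed

lemma expectation_play_sum_list_cong:
  fixes \<phi> \<psi> :: "round \<Rightarrow> real"
  assumes "\<And>x. admissible_round x \<Longrightarrow> \<phi> x = \<psi> x"
  shows "measure_pmf.expectation (play D S A T) (\<lambda>h. sum_list (map \<phi> h)) =
    measure_pmf.expectation (play D S A T) (\<lambda>h. sum_list (map \<psi> h))"
  by (rule integral_cong_AE)
    (auto simp: AE_measure_pmf_iff intro!: arg_cong[where f = sum_list] assms dest: admissible_play)

lemma expectation_play_sum_list_mono:
  fixes \<phi> \<psi> :: "round \<Rightarrow> real"
  assumes "\<And>x. admissible_round x \<Longrightarrow> \<phi> x \<le> \<psi> x"
    and "\<And>x. admissible_round x \<Longrightarrow> \<bar>\<phi> x\<bar> \<le> B" "\<And>x. admissible_round x \<Longrightarrow> \<bar>\<psi> x\<bar> \<le> B"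
  shows "measure_pmf.expectation (play D S A T) (\<lambda>h. sum_list (map \<phi> h)) \<le>
    measure_pmf.expectation (play D S A T) (\<lambda>h. sum_list (map \<psi> h))"
  by (rule integral_mono_AE)
    (auto simp: AE_measure_pmf_iff intro!: integrable_play_sum_list assms sum_list_mono
      dest: admissible_play)

definition regret_bounded :: "nat \<Rightarrow> real \<Rightarrow> bool" where
  "regret_bounded T \<rho> \<longleftrightarrow> (\<forall>v\<in>set_pmf D. \<forall>k\<le>K. b k \<le> v \<longrightarrow>
     util_fixed D S A T v k \<le> util_actual D S A T v + \<rho>)"

definition alloc :: "nat \<Rightarrow> real \<Rightarrow> real" where
  "alloc T w = measure_pmf.expectation (play D S A T)
     (\<lambda>h. sum_list (map (\<lambda>(v, j, M). if v = w then fst M j else 0) h))"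

text \<open>The truncation to \<open>[0, 1]\<close> is invisible in admissible rounds when \<open>k \<le> K\<close>; it only
  provides the global bound required by \<open>expectation_play_value_indicator\<close>.\<close>

definition arm_alloc :: "nat \<Rightarrow> nat \<Rightarrow> real" where
  "arm_alloc T k = measure_pmf.expectation (play D S A T)
     (\<lambda>h. sum_list (map (\<lambda>(v, j, M). max 0 (min 1 (fst M k))) h))"

lemma util_actual_lower_bound:
  assumes "regret_bounded T \<rho>" "v \<in> set_pmf D"
  shows "0 \<le> util_actual D S A T v + \<rho>"
proof -
  have "util_fixed D S A T v 0 = measure_pmf.expectation (play D S A T) (\<lambda>h. sum_list (map (\<lambda>_. 0) h))"
    unfolding util_fixed_def
    by (rule expectation_play_sum_list_cong) (auto simp: admissible_round_def valid_mech_def)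
  moreover have "b 0 \<le> v"
    using labels_valid values_unit assms(2) by (auto simp: valid_labels_def)
  ultimately show ?thesis
    using assms unfolding regret_bounded_def by force
qed

lemma alloc_bounds: "0 \<le> alloc T w \<and> alloc T w \<le> pmf D w * real T"
proof
  have "measure_pmf.expectation (play D S A T) (\<lambda>h. sum_list (map (\<lambda>_. 0) h)) \<le> alloc T w"
    unfolding alloc_def
    by (rule expectation_play_sum_list_mono[where B = 1]) (auto dest: admissible_round_played_range)
  then show "0 \<le> alloc T w" by simp
  have "alloc T w \<le> measure_pmf.expectation (play D S A T)
      (\<lambda>h. sum_list (map (\<lambda>(v, j, M). if v = w then 1 else 0) h))"
    unfolding alloc_def
    by (rule expectation_play_sum_list_mono[where B = 1]) (auto dest: admissible_round_played_range)
  also have "\<dots> = pmf D w * measure_pmf.expectation (play D S A T) (\<lambda>h. real (length h))"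
    using expectation_play_value_indicator[of "\<lambda>_. 1" 1 D S A T w]
    by (simp add: sum_list_triv case_prod_unfold)
  also have "measure_pmf.expectation (play D S A T) (\<lambda>h. real (length h)) = real T"
    by (subst integral_cong_AE[where g = "\<lambda>_. real T"]) (auto simp: AE_measure_pmf_iff length_play)
  finally show "alloc T w \<le> pmf D w * real T" .
qed

lemma expectation_play_value_indicator_arm_alloc:
  "measure_pmf.expectation (play D S A T)
     (\<lambda>h. sum_list (map (\<lambda>(v, j, M). if v = w then c * max 0 (min 1 (fst M k)) else 0) h)) =
   pmf D w * (c * arm_alloc T k)"
proof -
  have "\<bar>c * max 0 (min 1 (fst M k))\<bar> \<le> \<bar>c\<bar>" for M :: mech
    by (simp add: abs_mult mult_left_le)
  then have "measure_pmf.expectation (play D S A T)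
     (\<lambda>h. sum_list (map (\<lambda>(v, j, M). if v = w then c * max 0 (min 1 (fst M k)) else 0) h)) =
     pmf D w * measure_pmf.expectation (play D S A T)
       (\<lambda>h. sum_list (map (\<lambda>(v, j, M). c * max 0 (min 1 (fst M k))) h))"
    by (rule expectation_play_value_indicator)
  then show ?thesis
    unfolding arm_alloc_def by (simp add: case_prod_unfold sum_list_const_mult)
qed

lemma alloc_le_arm_alloc:
  assumes "k \<le> K" "\<And>j. j \<le> K \<Longrightarrow> b j \<le> w \<Longrightarrow> j \<le> k"
  shows "alloc T w \<le> pmf D w * arm_alloc T k"
proof -
  have "alloc T w \<le> measure_pmf.expectation (play D S A T)
      (\<lambda>h. sum_list (map (\<lambda>(v, j, M). if v = w then 1 * max 0 (min 1 (fst M k)) else 0) h))"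
    unfolding alloc_def
  proof (rule expectation_play_sum_list_mono[where B = 1])
    fix x assume admissible: "admissible_round x"
    obtain v j M where x: "x = (v, j, M)" by (cases x)
    have "0 \<le> fst M k" "fst M k \<le> 1"
      using admissible_round_range[of v j M k] admissible assms(1) by (auto simp: x)
    moreover have "fst M j \<le> fst M k" if "v = w"
      using admissible assms valid_mech_alloc_mono[of K b M k j] that
      by (auto simp: x admissible_round_def)
    ultimately show "(case x of (v, j, M) \<Rightarrow> if v = w then fst M j else 0) \<le>
        (case x of (v, j, M) \<Rightarrow> if v = w then 1 * max 0 (min 1 (fst M k)) else 0)"
      by (simp add: x)
  qed (auto dest: admissible_round_played_range)
  then show ?thesis
    unfolding expectation_play_value_indicator_arm_alloc by simp
qed

lemma arm_alloc_le_util_fixed: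
  assumes "k \<le> K" "b k \<le> w"
  shows "pmf D v * ((v - w) * arm_alloc T k) \<le> util_fixed D S A T v k"
proof -
  have "measure_pmf.expectation (play D S A T) (\<lambda>h. sum_list (map
      (\<lambda>(v', j, M). if v' = v then (v - w) * max 0 (min 1 (fst M k)) else 0) h)) \<le>
    util_fixed D S A T v k"
    unfolding util_fixed_def
  proof (rule expectation_play_sum_list_mono[where B = "\<bar>v\<bar> + \<bar>w\<bar> + 1"])
    fix x assume admissible: "admissible_round x"
    obtain v' j M where x: "x = (v', j, M)" by (cases x)
    have range: "0 \<le> snd M k" "snd M k \<le> fst M k" "0 \<le> fst M k" "fst M k \<le> 1"
      using admissible_round_range[of v' j M k] admissible assms(1) by (auto simp: x)
    have "snd M k \<le> fst M k * w"
      using admissible assms(1) mult_left_mono[OF assms(2) range(3)]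
      by (auto simp: x admissible_round_def valid_mech_def)
    then show "(case x of (v', j, M) \<Rightarrow> if v' = v then (v - w) * max 0 (min 1 (fst M k)) else 0) \<le>
        (case x of (v', j, M) \<Rightarrow> if v' = v then v * fst M k - snd M k else 0)"
      using range by (simp add: x algebra_simps)
    have "\<bar>v * fst M k\<bar> \<le> \<bar>v\<bar>" "\<bar>(v - w) * fst M k\<bar> \<le> \<bar>v - w\<bar>"
      using range by (simp_all add: abs_mult mult_left_le)
    then show "\<bar>case x of (v', j, M) \<Rightarrow> if v' = v then (v - w) * max 0 (min 1 (fst M k)) else 0\<bar>
        \<le> \<bar>v\<bar> + \<bar>w\<bar> + 1"
      and "\<bar>case x of (v', j, M) \<Rightarrow> if v' = v then v * fst M k - snd M k else 0\<bar> \<le> \<bar>v\<bar> + \<bar>w\<bar> + 1"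
      using range by (auto simp: x)
  qed
  then show ?thesis
    by (simp only: expectation_play_value_indicator_arm_alloc)
qed

lemma alloc_util_eq_payments:
  "w * alloc T w - util_actual D S A T w = measure_pmf.expectation (play D S A T)
     (\<lambda>h. sum_list (map (\<lambda>(v, j, M). if v = w then snd M j else 0) h))"
proof -
  have utility_bounded: "\<bar>w * a - p\<bar> \<le> \<bar>w\<bar> + 1" if "0 \<le> p" "p \<le> a" "a \<le> 1" for a p
  proof -
    have "\<bar>w * a\<bar> \<le> \<bar>w\<bar>"
      using that by (simp add: abs_mult mult_left_le)
    then show ?thesis using that by linarith
  qed
  have "w * alloc T w - util_actual D S A T w = measure_pmf.expectation (play D S A T)
      (\<lambda>h. w * sum_list (map (\<lambda>(v, j, M). if v = w then fst M j else 0) h) -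
        sum_list (map (\<lambda>(v, j, M). if v = w then w * fst M j - snd M j else 0) h))"
    unfolding alloc_def util_actual_def
    by (subst Bochner_Integration.integral_diff)
      (auto intro!: integrable_play_sum_list[where B = "\<bar>w\<bar> + 1"]
        dest!: admissible_round_played_range intro: utility_bounded)
  also have "\<dots> = measure_pmf.expectation (play D S A T)
      (\<lambda>h. sum_list (map (\<lambda>(v, j, M). if v = w then snd M j else 0) h))"
  proof (rule Bochner_Integration.integral_cong[OF refl])
    show "w * sum_list (map (\<lambda>(v, j, M). if v = w then fst M j else 0) h) -
        sum_list (map (\<lambda>(v, j, M). if v = w then w * fst M j - snd M j else 0) h) =
      sum_list (map (\<lambda>(v, j, M). if v = w then snd M j else 0) h)" for h
      by (induction h) (auto simp: algebra_simps)
  qed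
  finally show ?thesis .
qed

lemma revenue_eq_sum_alloc_util:
  "revenue D S A T = (\<Sum>w\<in>set_pmf D. w * alloc T w - util_actual D S A T w)"
proof -
  define payment :: "real \<Rightarrow> round \<Rightarrow> real"
    where "payment w = (\<lambda>(v, j, M). if v = w then snd M j else 0)" for w
  have payment_bounded: "\<bar>payment w x\<bar> \<le> 1" if "admissible_round x" for w x
  proof -
    obtain v j M where "x = (v, j, M)" by (cases x)
    then show ?thesis
      using that admissible_round_played_range[of v j M] by (auto simp: payment_def)
  qed
  have "revenue D S A T = measure_pmf.expectation (play D S A T)
      (\<lambda>h. sum_list (map (\<lambda>x. \<Sum>w\<in>set_pmf D. payment w x) h))"
    unfolding revenue_def
    by (rule expectation_play_sum_list_cong)
      (auto simp: payment_def admissible_round_def finite_values)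
  also have "\<dots> = measure_pmf.expectation (play D S A T)
      (\<lambda>h. \<Sum>w\<in>set_pmf D. sum_list (map (payment w) h))"
  proof (rule Bochner_Integration.integral_cong[OF refl])
    show "sum_list (map (\<lambda>x. \<Sum>w\<in>set_pmf D. payment w x) h) =
        (\<Sum>w\<in>set_pmf D. sum_list (map (payment w) h))" for h
      by (induction h) (simp_all add: sum.distrib)
  qed
  also have "\<dots> = (\<Sum>w\<in>set_pmf D. measure_pmf.expectation (play D S A T)
      (\<lambda>h. sum_list (map (payment w) h)))"
    by (rule Bochner_Integration.integral_sum) (rule integrable_play_sum_list[OF payment_bounded])
  finally show ?thesis
    by (simp add: alloc_util_eq_payments payment_def)
qed

lemma mb_constraint:
  assumes "regret_bounded T \<rho>" "v \<in> set_pmf D" "w \<in> set_pmf D" "w < v"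
  shows "(v - w) * alloc T w * pmf D v \<le> pmf D w * (util_actual D S A T v + \<rho>)"
proof -
  obtain k where k: "k \<le> K" "b k \<le> w" "\<And>j. j \<le> K \<Longrightarrow> b j \<le> w \<Longrightarrow> j \<le> k"
  proof (rule greatest_arm_below[OF labels_valid])
    show "0 \<le> w" using values_unit assms(3) by auto
  qed blast
  have "(v - w) * alloc T w * pmf D v \<le> (v - w) * (pmf D w * arm_alloc T k) * pmf D v"
    using alloc_le_arm_alloc[OF k(1,3)] assms(4) by (intro mult_right_mono mult_left_mono) auto
  also have "\<dots> = pmf D w * (pmf D v * ((v - w) * arm_alloc T k))"
    by (simp add: algebra_simps)
  also have "\<dots> \<le> pmf D w * util_fixed D S A T v k"
    using arm_alloc_le_util_fixed[OF k(1,2)] by (simp add: mult_left_mono)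
  also have "\<dots> \<le> pmf D w * (util_actual D S A T v + \<rho>)"
    using assms k(1,2) unfolding regret_bounded_def by (simp add: mult_left_mono)
  finally show ?thesis .
qed

lemma mb_feasible_scaled_alloc:
  assumes "T > 0" "regret_bounded T \<rho>"
  shows "mb_feasible D (\<lambda>w. alloc T w / (pmf D w * T))
    (\<lambda>w. (util_actual D S A T w + \<rho>) / (pmf D w * T))"
  unfolding mb_feasible_def
proof (intro ballI conjI impI)
  fix v assume v: "v \<in> set_pmf D"
  then have "0 < pmf D v"
    by (simp add: pmf_positive)
  then have pos: "0 < pmf D v * T"
    using assms(1) by simp
  show "0 \<le> (util_actual D S A T v + \<rho>) / (pmf D v * T)"
    using util_actual_lower_bound[OF assms(2) v] pos by simp
  show "0 \<le> alloc T v / (pmf D v * T)" "alloc T v / (pmf D v * T) \<le> 1"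
    using alloc_bounds[of T v] pos by simp_all
  fix w assume w: "w \<in> set_pmf D" "w < v"
  then have "0 < pmf D w" by (simp add: pmf_positive)
  then have "(v - w) * (alloc T w / (pmf D w * T)) =
      (v - w) * alloc T w * pmf D v / (pmf D w * (pmf D v * T))"
    using \<open>0 < pmf D v\<close> assms(1) by (simp add: field_simps)
  also have "\<dots> \<le> pmf D w * (util_actual D S A T v + \<rho>) / (pmf D w * (pmf D v * T))"
    using mb_constraint[OF assms(2) v w] \<open>0 < pmf D w\<close> pos by (intro divide_right_mono) auto
  also have "\<dots> = (util_actual D S A T v + \<rho>) / (pmf D v * T)"
    using \<open>0 < pmf D w\<close> by simp
  finally show "(v - w) * (alloc T w / (pmf D w * T)) \<le> (util_actual D S A T v + \<rho>) / (pmf D v * T)" .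
qed

theorem revenue_le_MBRev:
  assumes "regret_bounded T \<rho>"
  shows "revenue D S A T \<le> MBRev D * real T + real (card (set_pmf D)) * \<bar>\<rho>\<bar>"
proof (cases "T = 0")
  case True
  then show ?thesis by (simp add: revenue_def)
next
  case False
  define x where "x w = alloc T w / (pmf D w * T)" for w
  define u where "u w = (util_actual D S A T w + \<rho>) / (pmf D w * T)" for w
  have "mb_feasible D x u"
    unfolding x_def u_def using False assms by (intro mb_feasible_scaled_alloc) auto
  have "pmf D v * (v * x v - u v) = (v * alloc T v - util_actual D S A T v - \<rho>) / T"
    if "v \<in> set_pmf D" for v
    using False pmf_positive[OF that] by (simp add: x_def u_def field_simps)
  then have "(\<Sum>v\<in>set_pmf D. pmf D v * (v * x v - u v)) =
      (\<Sum>v\<in>set_pmf D. (v * alloc T v - util_actual D S A T v - \<rho>) / T)"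
    by (rule sum.cong[OF refl])
  also have "\<dots> = (revenue D S A T - real (card (set_pmf D)) * \<rho>) / T"
    unfolding revenue_eq_sum_alloc_util sum_divide_distrib[symmetric] by (simp add: sum_subtractf)
  finally have "(revenue D S A T - real (card (set_pmf D)) * \<rho>) / T \<le> MBRev D"
    using mb_objective_le_MBRev[OF finite_values values_unit \<open>mb_feasible D x u\<close>] by simp
  then have "revenue D S A T - real (card (set_pmf D)) * \<rho> \<le> MBRev D * T"
    using False by (simp add: divide_le_eq)
  moreover have "\<rho> \<le> \<bar>\<rho>\<bar>" by simp
  ultimately show ?thesis
    by (smt (verit) mult_left_mono of_nat_0_le_iff)
qed

end

theorem theoremC3:
  fixes D :: "real pmf" and K :: "nat \<Rightarrow> nat" and b :: "nat \<Rightarrow> nat \<Rightarrow> real"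
    and S :: "nat \<Rightarrow> seller_strat" and A :: "nat \<Rightarrow> buyer_alg" and r :: "nat \<Rightarrow> real"
  assumes "finite (set_pmf D)" and "set_pmf D \<subseteq> {0..1}"
    and "\<forall>T. valid_seller (K T) (b T) (S T)"
    and "\<forall>T. buyer_arms D (K T) (A T)"
    and "\<forall>T. conservative D (b T) (A T)"
    and "r \<in> o(\<lambda>T. real T)"
    and "\<forall>T. \<forall>v \<in> set_pmf D. \<forall>k \<le> K T. b T k \<le> v \<longrightarrow>
           util_fixed D (S T) (A T) T v k \<le> util_actual D (S T) (A T) T v + r T"
  shows "\<exists>g. g \<in> o(\<lambda>T. real T) \<and>
           (\<forall>T. revenue D (S T) (A T) T \<le> MBRev D * real T + g T)"
proof (intro exI conjI allI)
  show "(\<lambda>T. real (card (set_pmf D)) * \<bar>r T\<bar>) \<in> o(\<lambda>T. real T)"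
    using assms(6) by simp
  fix T
  interpret conservative_auction D "K T" "b T" "S T" "A T"
    using assms(1-5) by unfold_locales auto
  show "revenue D (S T) (A T) T \<le> MBRev D * real T + real (card (set_pmf D)) * \<bar>r T\<bar>"
    using assms(7) by (intro revenue_le_MBRev) (simp add: regret_bounded_def)
qed

end
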